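(* Let $\Gamma$ be the group generated by the super-Apollonian group $\mathcal A^S$, the $4\times4$ permutation matrices, and $\pm I$, and let $\tilde\Gamma=\langle\Gamma,D\rangle$ with $D=\frac12\begin{pmatrix}-1&1&1&1\\1&-1&1&1\\1&1&-1&1\\1&1&1&-1\end{pmatrix}$. Then $\tilde\Gamma=J_0\,O(3,1;\mathbb Z)\,J_0^{-1}$, where $J_0=\frac12\begin{pmatrix}1&1&1&1\\1&1&-1&-1\\1&-1&1&-1\\1&-1&-1&1\end{pmatrix}$.
   Context: Let $S_i$ ($i=1,\dots,4$) be the $4\times4$ integer matrix equal to the identity except that row $i$ has $-1$ in position $i$ and $2$ in the other three positions, and $S_i^\perp=S_i^T$; the super-Apollonian group is $\mathcal A^S=\langle S_1,\dots,S_4,S_1^\perp,\dots,S_4^\perp\rangle$. Let $Q_L=\mathrm{diag}(-1,1,1,1)$ and $O(3,1;\mathbb Z)=\{U\in M_4(\mathbb Z):U^TQ_LU=Q_L\}$. *)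

theory Defs
  imports "Jordan_Normal_Form.Matrix" "HOL-Combinatorics.Permutations"
begin

text \<open>All matrices are 4x4 matrices over the rationals (integer matrices are embedded).
Indices are 0-based: index i here corresponds to index i+1 in the paper.\<close>

definition S_mat :: "nat \<Rightarrow> rat mat" where
  "S_mat i = mat 4 4 (\<lambda>(r, c). if r = i then (if c = i then -1 else 2)
                               else if r = c then 1 else 0)"

definition S_perp :: "nat \<Rightarrow> rat mat" where
  "S_perp i = transpose_mat (S_mat i)"

definition perm_mat :: "(nat \<Rightarrow> nat) \<Rightarrow> rat mat" where
  "perm_mat p = mat 4 4 (\<lambda>(r, c). if p r = c then 1 else 0)"

definition D_mat :: "rat mat" where
  "D_mat = mat 4 4 (\<lambda>(r, c). if r = c then -1/2 else 1/2)"

definition J0 :: "rat mat" where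
  "J0 = mat_of_rows_list 4
     [[1/2, 1/2, 1/2, 1/2],
      [1/2, 1/2, -1/2, -1/2],
      [1/2, -1/2, 1/2, -1/2],
      [1/2, -1/2, -1/2, 1/2]]"

definition J0_inv :: "rat mat" where
  "J0_inv = (THE B. B \<in> carrier_mat 4 4 \<and> J0 * B = 1\<^sub>m 4 \<and> B * J0 = 1\<^sub>m 4)"

definition Q_L :: "rat mat" where
  "Q_L = mat 4 4 (\<lambda>(r, c). if r = c then (if r = 0 then -1 else 1) else 0)"

definition O31Z :: "rat mat set" where
  "O31Z = {U \<in> carrier_mat 4 4. (\<forall>r<4. \<forall>c<4. U $$ (r, c) \<in> \<int>) \<and>
                                transpose_mat U * Q_L * U = Q_L}"

inductive_set gen_grp :: "rat mat set \<Rightarrow> rat mat set" for G where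
  one: "1\<^sub>m 4 \<in> gen_grp G"
| gen: "g \<in> G \<Longrightarrow> g \<in> gen_grp G"
| mult: "A \<in> gen_grp G \<Longrightarrow> B \<in> gen_grp G \<Longrightarrow> A * B \<in> gen_grp G"
| inv: "A \<in> gen_grp G \<Longrightarrow> B \<in> carrier_mat 4 4 \<Longrightarrow> A * B = 1\<^sub>m 4 \<Longrightarrow> B \<in> gen_grp G"

definition superApollonian :: "rat mat set" where
  "superApollonian = gen_grp ({S_mat i | i. i < 4} \<union> {S_perp i | i. i < 4})"

definition Gamma :: "rat mat set" where
  "Gamma = gen_grp (superApollonian \<union> {perm_mat p | p. p permutes {..<4}}
                    \<union> {1\<^sub>m 4, - 1\<^sub>m 4})"

definition Gamma_tilde :: "rat mat set" where
  "Gamma_tilde = gen_grp (Gamma \<union> {D_mat})"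

end

theory Submission
  imports Defs Jordan_Normal_Form.Determinant
begin

(* Conjugation by J0 is an involutive automorphism, as J0 is symmetric with J0 * J0 = 1.  It maps
   every generator of Gamma_tilde to an integral Lorentz matrix: S_mat 0 (the paper's S_1) to the
   reflection R in the vector (1, 1, 1, 1), D to diag(1, -1, -1, -1), and permutation matrices to
   signed permutation matrices.  Conversely, R, the sign changes of single coordinates and the
   permutations of the last three coordinates are conjugates of elements of Gamma_tilde, and they
   reduce every integral Lorentz matrix U to the identity.  Once the first column (b0, b1, b2, b3)
   of U is nonnegative, b0^2 = 1 + b1^2 + b2^2 + b3^2 forces either b0 = 1, so that this column
   is e0, or |2 b0 - b1 - b2 - b3| < b0, so that R lowers b0.  When the first column is e0, the
   other columns are signed unit vectors, which permutations and sign changes put in place one at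
   a time. *)

definition mat4 :: "rat list list \<Rightarrow> rat mat" where
  "mat4 xs = mat 4 4 (\<lambda>(i, j). xs ! i ! j)"

lemma mat4_carrier [simp]: "mat4 xs \<in> carrier_mat 4 4"
  by (simp add: mat4_def)

lemma dim_mat4 [simp]: "dim_row (mat4 xs) = 4" "dim_col (mat4 xs) = 4"
  by (simp_all add: mat4_def)

lemma index_mat4 [simp]: "i < 4 \<Longrightarrow> j < 4 \<Longrightarrow> mat4 xs $$ (i, j) = xs ! i ! j"
  by (simp add: mat4_def)

lemma less_4_cases: "(i :: nat) < 4 \<longleftrightarrow> i = 0 \<or> i = 1 \<or> i = 2 \<or> i = 3"
  by auto

lemma all_less_4: "(\<forall>i < (4 :: nat). P i) \<longleftrightarrow> P 0 \<and> P 1 \<and> P 2 \<and> P 3"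
  by (auto simp: less_4_cases)

lemma index_mult_mat4:
  assumes "dim_row A = 4" "dim_col A = 4" "dim_row B = 4" "dim_col B = 4" "i < 4" "j < 4"
  shows "(A * B) $$ (i, j) =
    A $$ (i, 0) * B $$ (0, j) + A $$ (i, 1) * B $$ (1, j) + A $$ (i, 2) * B $$ (2, j) + A $$ (i, 3) * B $$ (3, j)"
  using assms by (simp add: scalar_prod_def numeral_eq_Suc)

lemma mat4_eqI:
  assumes "dim_row A = 4" "dim_col A = 4" "dim_row B = 4" "dim_col B = 4"
    and "\<forall>i \<in> {0, 1, 2, 3}. \<forall>j \<in> {0, 1, 2, 3}. A $$ (i, j) = B $$ (i, j)"
  shows "A = B"
  using assms by (intro eq_matI) (auto simp: less_4_cases)

lemma mult_carrier_mat4 [simp]: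
  "(A :: rat mat) \<in> carrier_mat 4 4 \<Longrightarrow> B \<in> carrier_mat 4 4 \<Longrightarrow> A * B \<in> carrier_mat 4 4"
  by (rule mult_carrier_mat)

lemma mult_one_mat4 [simp]: "(A :: rat mat) \<in> carrier_mat 4 4 \<Longrightarrow> A * 1\<^sub>m 4 = A"
  by (rule right_mult_one_mat)

lemma one_mult_mat4 [simp]: "(A :: rat mat) \<in> carrier_mat 4 4 \<Longrightarrow> 1\<^sub>m 4 * A = A"
  by (rule left_mult_one_mat)

lemma mult_assoc4:
  "(A :: rat mat) \<in> carrier_mat 4 4 \<Longrightarrow> B \<in> carrier_mat 4 4 \<Longrightarrow> C \<in> carrier_mat 4 4 \<Longrightarrow>
    A * B * C = A * (B * C)"
  by (rule assoc_mult_mat)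

lemma transpose_mult4:
  "(A :: rat mat) \<in> carrier_mat 4 4 \<Longrightarrow> B \<in> carrier_mat 4 4 \<Longrightarrow>
    transpose_mat (A * B) = transpose_mat B * transpose_mat A"
  using transpose_mult by blast

lemma J0_mat4:
  "J0 = mat4 [[1/2, 1/2, 1/2, 1/2], [1/2, 1/2, -1/2, -1/2], [1/2, -1/2, 1/2, -1/2], [1/2, -1/2, -1/2, 1/2]]"
  unfolding J0_def mat4_def mat_of_rows_list_def by (simp add: numeral_eq_Suc)

lemma Q_L_mat4: "Q_L = mat4 [[-1, 0, 0, 0], [0, 1, 0, 0], [0, 0, 1, 0], [0, 0, 0, 1]]"
  unfolding Q_L_def mat4_def by (rule eq_matI) (auto simp: less_4_cases)

lemma J0_carrier [simp]: "J0 \<in> carrier_mat 4 4"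
  and dim_J0 [simp]: "dim_row J0 = 4" "dim_col J0 = 4"
  by (simp_all add: J0_mat4)

lemma Q_L_carrier [simp]: "Q_L \<in> carrier_mat 4 4"
  and dim_Q_L [simp]: "dim_row Q_L = 4" "dim_col Q_L = 4"
  by (simp_all add: Q_L_mat4)

lemma J0_mult_J0: "J0 * J0 = 1\<^sub>m 4"
  unfolding J0_mat4 by (rule mat4_eqI) (simp_all del: index_mult_mat(1) add: index_mult_mat4)

lemma Q_L_mult_Q_L: "Q_L * Q_L = 1\<^sub>m 4"
  unfolding Q_L_mat4 by (rule mat4_eqI) (simp_all del: index_mult_mat(1) add: index_mult_mat4)

lemma transpose_J0: "transpose_mat J0 = J0"
  unfolding J0_mat4 by (rule mat4_eqI) simp_all

lemma transpose_Q_L: "transpose_mat Q_L = Q_L"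
  unfolding Q_L_mat4 by (rule mat4_eqI) simp_all

lemma J0_inv_eq_J0: "J0_inv = J0"
  unfolding J0_inv_def
proof (rule the_equality)
  fix B assume B: "B \<in> carrier_mat 4 4 \<and> J0 * B = 1\<^sub>m 4 \<and> B * J0 = 1\<^sub>m 4"
  then have "B = (J0 * J0) * B" by (simp add: J0_mult_J0)
  also have "\<dots> = J0" using B by (simp add: mult_assoc4)
  finally show "B = J0" .
qed (simp add: J0_mult_J0)

definition J0_conj :: "rat mat \<Rightarrow> rat mat" where
  "J0_conj M = J0 * M * J0"

lemma J0_conj_carrier [simp]: "M \<in> carrier_mat 4 4 \<Longrightarrow> J0_conj M \<in> carrier_mat 4 4"
  by (simp add: J0_conj_def)

lemma J0_mult_J0_mult [simp]: "M \<in> carrier_mat 4 4 \<Longrightarrow> J0 * (J0 * M) = M"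
  by (simp flip: mult_assoc4 add: J0_mult_J0)

lemma J0_conj_J0_conj [simp]: "M \<in> carrier_mat 4 4 \<Longrightarrow> J0_conj (J0_conj M) = M"
  unfolding J0_conj_def by (simp add: mult_assoc4 J0_mult_J0)

lemma J0_conj_mult:
  "A \<in> carrier_mat 4 4 \<Longrightarrow> B \<in> carrier_mat 4 4 \<Longrightarrow> J0_conj (A * B) = J0_conj A * J0_conj B"
  unfolding J0_conj_def by (simp add: mult_assoc4)

lemma J0_conj_one [simp]: "J0_conj (1\<^sub>m 4) = 1\<^sub>m 4"
  unfolding J0_conj_def by (simp add: J0_mult_J0)

lemma J0_conj_uminus: "M \<in> carrier_mat 4 4 \<Longrightarrow> J0_conj (- M) = - J0_conj M"
  unfolding J0_conj_def using carrier_matD[of M 4 4] by simp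

lemma transpose_J0_conj:
  "M \<in> carrier_mat 4 4 \<Longrightarrow> transpose_mat (J0_conj M) = J0_conj (transpose_mat M)"
  unfolding J0_conj_def by (simp add: transpose_mult4 transpose_J0 mult_assoc4)

lemma J0_conj_image_iff:
  assumes H: "H \<subseteq> carrier_mat 4 4" and M: "M \<in> carrier_mat 4 4"
  shows "M \<in> J0_conj ` H \<longleftrightarrow> J0_conj M \<in> H"
proof
  assume "M \<in> J0_conj ` H"
  then obtain N where "N \<in> H" "M = J0_conj N" by blast
  moreover have "N \<in> carrier_mat 4 4" using H \<open>N \<in> H\<close> by blast
  ultimately show "J0_conj M \<in> H" by simp
next
  assume "J0_conj M \<in> H"
  then show "M \<in> J0_conj ` H" using J0_conj_J0_conj[OF M] by (metis image_eqI)
qed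

lemma perm_mat_carrier [simp]: "perm_mat p \<in> carrier_mat 4 4"
  by (simp add: perm_mat_def)

lemma perm_mat_id: "perm_mat id = 1\<^sub>m 4"
  by (rule eq_matI) (auto simp: perm_mat_def)

lemma index_perm_mat_mult:
  assumes p: "p permutes {..<4}" and "A \<in> carrier_mat 4 4" "i < 4" "j < 4"
  shows "(perm_mat p * A) $$ (i, j) = A $$ (p i, j)"
proof -
  have "p i < 4" using permutes_in_image[OF p] \<open>i < 4\<close> by simp
  then show ?thesis
    using assms by (simp add: perm_mat_def scalar_prod_def if_distrib[of "\<lambda>x. x * _"] cong: if_cong)
qed

lemma index_mult_perm_mat:
  assumes p: "p permutes {..<4}" and "A \<in> carrier_mat 4 4" "i < 4" "j < 4"
  shows "(A * perm_mat p) $$ (i, p j) = A $$ (i, j)"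
proof -
  have "p j < 4" using permutes_in_image[OF p] \<open>j < 4\<close> by simp
  moreover have "p k = p j \<longleftrightarrow> k = j" for k
    using permutes_inj[OF p] by (auto dest: injD)
  ultimately show ?thesis
    using assms by (simp add: perm_mat_def scalar_prod_def if_distrib[of "\<lambda>x. _ * x"] cong: if_cong)
qed

lemma perm_mat_comp:
  assumes "p permutes {..<4}"
  shows "perm_mat (q \<circ> p) = perm_mat p * perm_mat q"
proof (rule eq_matI)
  fix i j assume "i < dim_row (perm_mat p * perm_mat q)" "j < dim_col (perm_mat p * perm_mat q)"
  then have "i < 4" "j < 4" by (simp_all add: perm_mat_def)
  then show "perm_mat (q \<circ> p) $$ (i, j) = (perm_mat p * perm_mat q) $$ (i, j)"
    using permutes_in_image[OF assms]
    by (simp add: index_perm_mat_mult[OF assms perm_mat_carrier]) (simp add: perm_mat_def)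
qed (simp_all add: perm_mat_def)

lemma index_perm_mat_conj:
  assumes p: "p permutes {..<4}" and A: "A \<in> carrier_mat 4 4" and "i < 4" "j < 4"
  shows "(perm_mat p * A * perm_mat p) $$ (i, p j) = A $$ (p i, j)"
  using assms
  by (simp add: index_mult_perm_mat[OF p mult_carrier_mat4[OF perm_mat_carrier A]] index_perm_mat_mult[OF p A])

lemma S_mat_carrier [simp]: "S_mat i \<in> carrier_mat 4 4"
  by (simp add: S_mat_def)

lemma D_mat_carrier [simp]: "D_mat \<in> carrier_mat 4 4"
  by (simp add: D_mat_def)

lemma S_mat_perm_conj:
  assumes "i < 4"
  shows "S_mat i = perm_mat (Transposition.transpose 0 i) * S_mat 0 * perm_mat (Transposition.transpose 0 i)"
    (is "_ = perm_mat ?\<tau> * _ * _")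
proof (rule eq_matI)
  have \<tau>: "?\<tau> permutes {..<4}" using assms by (simp add: permutes_swap_id)
  fix r c
  assume "r < dim_row (perm_mat ?\<tau> * S_mat 0 * perm_mat ?\<tau>)" "c < dim_col (perm_mat ?\<tau> * S_mat 0 * perm_mat ?\<tau>)"
  then have "r < 4" "?\<tau> c < 4" using permutes_in_image[OF \<tau>] by (simp_all add: perm_mat_def)
  then have "(perm_mat ?\<tau> * S_mat 0 * perm_mat ?\<tau>) $$ (r, c) = S_mat 0 $$ (?\<tau> r, ?\<tau> c)"
    using index_perm_mat_conj[OF \<tau> S_mat_carrier, of r "?\<tau> c"] by simp
  then show "S_mat i $$ (r, c) = (perm_mat ?\<tau> * S_mat 0 * perm_mat ?\<tau>) $$ (r, c)"
    using \<open>r < 4\<close> \<open>?\<tau> c < 4\<close> permutes_in_image[OF \<tau>] assms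
    by (auto simp: S_mat_def Transposition.transpose_def)
qed (simp_all add: perm_mat_def S_mat_def)

definition flip_mat :: "nat \<Rightarrow> rat mat" where
  "flip_mat k = mat 4 4 (\<lambda>(i, j). if i = j then (if i = k then -1 else 1) else 0)"

lemma flip_mat_carrier [simp]: "flip_mat k \<in> carrier_mat 4 4"
  by (simp add: flip_mat_def)

lemma index_flip_mat_mult:
  assumes "A \<in> carrier_mat 4 4" "i < 4" "j < 4"
  shows "(flip_mat k * A) $$ (i, j) = (if i = k then - A $$ (i, j) else A $$ (i, j))"
  using assms by (simp add: flip_mat_def scalar_prod_def if_distrib[of "\<lambda>x. x * _"] cong: if_cong)

section \<open>The integral Lorentz group\<close>

definition integral_mat :: "rat mat \<Rightarrow> bool" where
  "integral_mat A \<longleftrightarrow> (\<forall>i < dim_row A. \<forall>j < dim_col A. A $$ (i, j) \<in> \<int>)"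

lemma integral_mat_mult:
  "integral_mat A \<Longrightarrow> integral_mat B \<Longrightarrow> dim_col A = dim_row B \<Longrightarrow> integral_mat (A * B)"
  unfolding integral_mat_def by (auto simp: scalar_prod_def intro!: Ints_sum Ints_mult)

lemma integral_mat_transpose: "integral_mat A \<Longrightarrow> integral_mat (transpose_mat A)"
  unfolding integral_mat_def by simp

lemma integral_mat_one: "integral_mat (1\<^sub>m n)"
  unfolding integral_mat_def by simp

lemma integral_mat_Q_L: "integral_mat Q_L"
  unfolding integral_mat_def Q_L_def by simp

lemma O31Z_iff:
  "U \<in> O31Z \<longleftrightarrow> U \<in> carrier_mat 4 4 \<and> integral_mat U \<and> transpose_mat U * Q_L * U = Q_L"
  unfolding O31Z_def integral_mat_def by auto

lemma O31Z_carrier: "O31Z \<subseteq> carrier_mat 4 4"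
  by (auto simp: O31Z_iff)

lemma O31Z_iff_entries:
  "U \<in> O31Z \<longleftrightarrow> U \<in> carrier_mat 4 4 \<and> (\<forall>i < 4. \<forall>j < 4. U $$ (i, j) \<in> \<int>) \<and>
    (\<forall>i < 4. \<forall>j < 4. - U $$ (0, i) * U $$ (0, j) + U $$ (1, i) * U $$ (1, j) + U $$ (2, i) * U $$ (2, j)
      + U $$ (3, i) * U $$ (3, j) = (if i = j then (if i = 0 then -1 else 1) else 0))"
proof -
  have "(transpose_mat U * Q_L * U) $$ (i, j) =
      - U $$ (0, i) * U $$ (0, j) + U $$ (1, i) * U $$ (1, j) + U $$ (2, i) * U $$ (2, j) + U $$ (3, i) * U $$ (3, j)"
    if "U \<in> carrier_mat 4 4" "i < 4" "j < 4" for i j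
    using that unfolding Q_L_mat4 by (simp del: index_mult_mat(1) add: index_mult_mat4)
  moreover have "Q_L $$ (i, j) = (if i = j then (if i = 0 then -1 else 1) else 0)" if "i < 4" "j < 4" for i j
    using that by (simp add: Q_L_def)
  moreover have "transpose_mat U * Q_L * U = Q_L \<longleftrightarrow>
      (\<forall>i < 4. \<forall>j < 4. (transpose_mat U * Q_L * U) $$ (i, j) = Q_L $$ (i, j))"
    if "U \<in> carrier_mat 4 4"
    using carrier_matD[OF that] by (auto intro!: eq_matI simp del: index_mult_mat(1))
  ultimately show ?thesis
    unfolding O31Z_def by auto
qed

lemma O31Z_entry_Ints: "U \<in> O31Z \<Longrightarrow> i < 4 \<Longrightarrow> j < 4 \<Longrightarrow> U $$ (i, j) \<in> \<int>"
  unfolding O31Z_iff_entries by blast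

lemma O31Z_lorentz_entry:
  assumes "U \<in> O31Z" "i < 4" "j < 4"
  shows "- U $$ (0, i) * U $$ (0, j) + U $$ (1, i) * U $$ (1, j) + U $$ (2, i) * U $$ (2, j)
      + U $$ (3, i) * U $$ (3, j) = (if i = j then (if i = 0 then -1 else 1) else 0)"
  using assms unfolding O31Z_iff_entries by blast

lemma O31Z_one: "1\<^sub>m 4 \<in> O31Z"
  by (simp add: O31Z_iff integral_mat_one transpose_Q_L)

lemma O31Z_mult:
  assumes "U \<in> O31Z" "V \<in> O31Z"
  shows "U * V \<in> O31Z"
proof -
  have UV: "U \<in> carrier_mat 4 4" "V \<in> carrier_mat 4 4" using assms by (simp_all add: O31Z_iff)
  then have "transpose_mat (U * V) * Q_L * (U * V) = transpose_mat V * (transpose_mat U * Q_L * U) * V"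
    by (simp add: transpose_mult4 mult_assoc4)
  then show ?thesis using assms UV by (simp add: O31Z_iff integral_mat_mult)
qed

lemma O31Z_uminus:
  assumes "U \<in> O31Z"
  shows "- U \<in> O31Z"
proof -
  have "dim_row U = 4" "dim_col U = 4" using assms by (auto simp: O31Z_iff)
  then show ?thesis using assms by (simp add: O31Z_iff_entries)
qed

lemma O31Z_left_inverse:
  assumes "U \<in> O31Z"
  shows "(Q_L * transpose_mat U * Q_L) * U = 1\<^sub>m 4"
proof -
  have "U \<in> carrier_mat 4 4" "transpose_mat U * Q_L * U = Q_L" using assms by (simp_all add: O31Z_iff)
  then have "(Q_L * transpose_mat U * Q_L) * U = Q_L * (transpose_mat U * Q_L * U)"
    by (simp add: mult_assoc4)
  then show ?thesis using \<open>transpose_mat U * Q_L * U = Q_L\<close> by (simp add: Q_L_mult_Q_L)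
qed

lemma O31Z_right_inverse:
  assumes U: "U \<in> O31Z" and V: "V \<in> carrier_mat 4 4" and UV: "U * V = 1\<^sub>m 4"
  shows "V \<in> O31Z"
proof -
  have Uc: "U \<in> carrier_mat 4 4" and U_Lorentz: "transpose_mat U * Q_L * U = Q_L"
    using U by (simp_all add: O31Z_iff)
  have "V = (Q_L * transpose_mat U * Q_L) * U * V"
    using O31Z_left_inverse[OF U] V by simp
  also have "\<dots> = Q_L * transpose_mat U * Q_L"
    using Uc V UV by (simp add: mult_assoc4)
  finally have V_eq: "V = Q_L * transpose_mat U * Q_L" .
  have "Q_L = transpose_mat (U * V) * Q_L * (U * V)"
    using UV by (simp add: transpose_Q_L)
  also have "\<dots> = transpose_mat V * (transpose_mat U * Q_L * U) * V"
    using Uc V by (simp add: transpose_mult4 mult_assoc4)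
  finally have "transpose_mat V * Q_L * V = Q_L"
    using U_Lorentz by simp
  moreover have "integral_mat V"
    using U unfolding V_eq O31Z_iff
    by (auto intro!: integral_mat_mult integral_mat_transpose integral_mat_Q_L)
  ultimately show ?thesis using V by (simp add: O31Z_iff)
qed

lemma O31Z_transpose:
  assumes U: "U \<in> O31Z"
  shows "transpose_mat U \<in> O31Z"
proof -
  have Uc: "U \<in> carrier_mat 4 4" using U by (simp add: O31Z_iff)
  have "U * (Q_L * transpose_mat U * Q_L) = 1\<^sub>m 4"
    using mat_mult_left_right_inverse[OF _ Uc O31Z_left_inverse[OF U]] Uc by simp
  moreover have "U * Q_L * transpose_mat U = (U * (Q_L * transpose_mat U * Q_L)) * Q_L"
    using Uc by (simp add: mult_assoc4 Q_L_mult_Q_L)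
  ultimately have "transpose_mat (transpose_mat U) * Q_L * transpose_mat U = Q_L"
    by simp
  then show ?thesis using U by (simp add: O31Z_iff integral_mat_transpose)
qed

definition mat_subgroup :: "rat mat set \<Rightarrow> bool" where
  "mat_subgroup H \<longleftrightarrow> H \<subseteq> carrier_mat 4 4 \<and> 1\<^sub>m 4 \<in> H \<and> (\<forall>A \<in> H. \<forall>B \<in> H. A * B \<in> H) \<and>
     (\<forall>A \<in> H. \<forall>B \<in> carrier_mat 4 4. A * B = 1\<^sub>m 4 \<longrightarrow> B \<in> H)"

lemma mat_subgroupD:
  assumes "mat_subgroup H"
  shows "H \<subseteq> carrier_mat 4 4" and "1\<^sub>m 4 \<in> H" and "A \<in> H \<Longrightarrow> B \<in> H \<Longrightarrow> A * B \<in> H"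
    and "A \<in> H \<Longrightarrow> B \<in> carrier_mat 4 4 \<Longrightarrow> A * B = 1\<^sub>m 4 \<Longrightarrow> B \<in> H"
  using assms unfolding mat_subgroup_def by blast+

lemma subset_gen_grp: "G \<subseteq> gen_grp G"
  by (blast intro: gen_grp.gen)

lemma gen_grp_least:
  assumes "mat_subgroup H" "G \<subseteq> H"
  shows "gen_grp G \<subseteq> H"
proof
  fix A assume "A \<in> gen_grp G"
  then show "A \<in> H" using assms by induction (auto simp: mat_subgroup_def)
qed

lemma mat_subgroup_gen_grp: "gen_grp G \<subseteq> carrier_mat 4 4 \<Longrightarrow> mat_subgroup (gen_grp G)"
  unfolding mat_subgroup_def
  by (intro conjI ballI impI gen_grp.one gen_grp.mult; assumption?) (rule gen_grp.inv)

lemma mat_subgroup_O31Z: "mat_subgroup O31Z"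
  unfolding mat_subgroup_def
proof (intro conjI ballI impI)
  show "O31Z \<subseteq> carrier_mat 4 4" by (rule O31Z_carrier)
  show "1\<^sub>m 4 \<in> O31Z" by (rule O31Z_one)
  fix A B assume A: "A \<in> O31Z"
  show "B \<in> O31Z \<Longrightarrow> A * B \<in> O31Z" by (rule O31Z_mult[OF A])
  show "B \<in> carrier_mat 4 4 \<Longrightarrow> A * B = 1\<^sub>m 4 \<Longrightarrow> B \<in> O31Z" by (rule O31Z_right_inverse[OF A])
qed

lemma mat_subgroup_J0_conj_image:
  assumes H: "mat_subgroup H"
  shows "mat_subgroup (J0_conj ` H)"
proof -
  have carrier: "H \<subseteq> carrier_mat 4 4" by (rule mat_subgroupD(1)[OF H])
  have mult: "J0_conj M * J0_conj N \<in> J0_conj ` H" if "M \<in> H" "N \<in> H" for M N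
  proof -
    have "J0_conj M * J0_conj N = J0_conj (M * N)"
      using that carrier by (simp add: J0_conj_mult subset_iff)
    moreover have "M * N \<in> H" using that by (rule mat_subgroupD(3)[OF H])
    ultimately show ?thesis by blast
  qed
  have inv: "B \<in> J0_conj ` H" if "M \<in> H" "B \<in> carrier_mat 4 4" "J0_conj M * B = 1\<^sub>m 4" for M B
  proof -
    have "M * J0_conj B = J0_conj (J0_conj M * B)"
      using that(1,2) carrier by (auto simp: J0_conj_mult)
    then have "M * J0_conj B = 1\<^sub>m 4" using that(3) by simp
    then have "J0_conj B \<in> H" using that(2) by (intro mat_subgroupD(4)[OF H that(1)]) simp_all
    then show ?thesis using J0_conj_image_iff[OF carrier that(2)] by blast
  qed
  have "J0_conj (1\<^sub>m 4) \<in> J0_conj ` H"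
    using mat_subgroupD(2)[OF H] by (rule imageI)
  then have one: "1\<^sub>m 4 \<in> J0_conj ` H" by simp
  have "J0_conj ` H \<subseteq> carrier_mat 4 4"
    using carrier by auto
  moreover have "\<forall>A \<in> J0_conj ` H. \<forall>B \<in> J0_conj ` H. A * B \<in> J0_conj ` H"
    using mult by blast
  moreover have "\<forall>A \<in> J0_conj ` H. \<forall>B \<in> carrier_mat 4 4. A * B = 1\<^sub>m 4 \<longrightarrow> B \<in> J0_conj ` H"
    using inv by blast
  ultimately show ?thesis
    using one unfolding mat_subgroup_def by (intro conjI)
qed

section \<open>Conjugates of the generators\<close>

text \<open>Reflection in the vector (1, 1, 1, 1), which has Q_L-norm 2.\<close>

definition lorentz_reflection :: "rat mat" where
  "lorentz_reflection = mat4 [[2, -1, -1, -1], [1, 0, -1, -1], [1, -1, 0, -1], [1, -1, -1, 0]]"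

lemma lorentz_reflection_in_O31Z: "lorentz_reflection \<in> O31Z"
  unfolding O31Z_iff_entries lorentz_reflection_def all_less_4 by simp

text \<open>Identify {0, 1, 2, 3} with (Z/2)^2 under bitwise xor.  Then 2 J0 is the matrix of
  (-1)^<r, c> for the nondegenerate pairing with <r, c> = 1 iff r and c are distinct and nonzero.
  Hence J0 turns the translations (the double transpositions) into sign changes and commutes with
  the permutations fixing 0, which preserve the pairing.\<close>

lemma J0_conj_S_mat_0: "J0_conj (S_mat 0) = lorentz_reflection"
  unfolding J0_conj_def J0_mat4 lorentz_reflection_def
  by (rule mat4_eqI) (simp_all del: index_mult_mat(1) add: index_mult_mat4 S_mat_def)

lemma J0_conj_D_mat: "J0_conj D_mat = - flip_mat 0"
  unfolding J0_conj_def J0_mat4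
  by (rule mat4_eqI) (simp_all del: index_mult_mat(1) add: index_mult_mat4 D_mat_def flip_mat_def)

lemma J0_conj_D_mat_perm_mat:
  "J0_conj (D_mat * perm_mat (Transposition.transpose 0 1 \<circ> Transposition.transpose 2 3)) = flip_mat 1"
  "J0_conj (D_mat * perm_mat (Transposition.transpose 0 2 \<circ> Transposition.transpose 1 3)) = flip_mat 2"
  "J0_conj (D_mat * perm_mat (Transposition.transpose 0 3 \<circ> Transposition.transpose 1 2)) = flip_mat 3"
  unfolding J0_conj_def J0_mat4
  by (rule mat4_eqI;
      simp del: index_mult_mat(1) add: index_mult_mat4 D_mat_def flip_mat_def perm_mat_def Transposition.transpose_def)+

lemma J0_conj_transposition_fixed:
  "J0_conj (perm_mat (Transposition.transpose 1 2)) = perm_mat (Transposition.transpose 1 2)"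
  "J0_conj (perm_mat (Transposition.transpose 1 3)) = perm_mat (Transposition.transpose 1 3)"
  "J0_conj (perm_mat (Transposition.transpose 2 3)) = perm_mat (Transposition.transpose 2 3)"
  unfolding J0_conj_def J0_mat4
  by (rule mat4_eqI; simp del: index_mult_mat(1) add: index_mult_mat4 perm_mat_def Transposition.transpose_def)+

lemma J0_conj_transposition_in_O31Z:
  "J0_conj (perm_mat (Transposition.transpose 0 1)) \<in> O31Z"
  "J0_conj (perm_mat (Transposition.transpose 0 2)) \<in> O31Z"
  "J0_conj (perm_mat (Transposition.transpose 0 3)) \<in> O31Z"
  "J0_conj (perm_mat (Transposition.transpose 1 2)) \<in> O31Z"
  "J0_conj (perm_mat (Transposition.transpose 1 3)) \<in> O31Z"
  "J0_conj (perm_mat (Transposition.transpose 2 3)) \<in> O31Z"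
  unfolding O31Z_iff_entries J0_conj_def J0_mat4 all_less_4
  by (simp_all del: index_mult_mat(1) add: index_mult_mat4 perm_mat_def Transposition.transpose_def)

lemma flip_mat_0_in_O31Z: "flip_mat 0 \<in> O31Z"
  unfolding O31Z_iff_entries all_less_4 by (simp add: flip_mat_def)

lemma J0_conj_perm_mat_in_O31Z:
  assumes "p permutes {..<4}"
  shows "J0_conj (perm_mat p) \<in> O31Z"
  using assms finite_lessThan
proof (induction rule: permutes_induct)
  case id
  show ?case using perm_mat_id[unfolded id_def] O31Z_one by simp
next
  case (swap a b p)
  have "J0_conj (perm_mat (Transposition.transpose a' b')) \<in> O31Z" if "a' < b'" "b' < 4" for a' b'
    using that J0_conj_transposition_in_O31Z less_4_cases[of a'] less_4_cases[of b'] by auto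
  then have "J0_conj (perm_mat (Transposition.transpose a b)) \<in> O31Z"
    using swap(1-3) by (metis lessThan_iff linorder_neqE_nat transpose_commute)
  moreover have "perm_mat (\<lambda>c. Transposition.transpose a b (p c)) =
      perm_mat p * perm_mat (Transposition.transpose a b)"
    using perm_mat_comp[OF \<open>p permutes {..<4}\<close>] by (simp add: comp_def)
  ultimately show ?case
    using \<open>J0_conj (perm_mat p) \<in> O31Z\<close> by (simp add: J0_conj_mult O31Z_mult)
qed

lemma J0_conj_S_mat_in_O31Z:
  assumes "i < 4"
  shows "J0_conj (S_mat i) \<in> O31Z"
proof -
  let ?P = "perm_mat (Transposition.transpose 0 i)"
  have "J0_conj ?P \<in> O31Z"
    using assms by (simp add: J0_conj_perm_mat_in_O31Z permutes_swap_id)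
  moreover have "J0_conj (S_mat i) = J0_conj ?P * J0_conj (S_mat 0) * J0_conj ?P"
    using S_mat_perm_conj[OF assms] by (simp add: J0_conj_mult)
  ultimately show ?thesis
    by (simp add: J0_conj_S_mat_0 lorentz_reflection_in_O31Z O31Z_mult)
qed

lemma mem_J0_conj_O31ZI: "M \<in> carrier_mat 4 4 \<Longrightarrow> J0_conj M \<in> O31Z \<Longrightarrow> M \<in> J0_conj ` O31Z"
  using J0_conj_image_iff[OF O31Z_carrier] by blast

lemma Gamma_tilde_subset_J0_conj_O31Z: "Gamma_tilde \<subseteq> J0_conj ` O31Z"
proof -
  have L: "mat_subgroup (J0_conj ` O31Z)"
    by (rule mat_subgroup_J0_conj_image[OF mat_subgroup_O31Z])
  have "S_mat i \<in> J0_conj ` O31Z" "S_perp i \<in> J0_conj ` O31Z" if "i < 4" for i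
    using J0_conj_S_mat_in_O31Z[OF that]
    by (auto simp: S_perp_def transpose_J0_conj[symmetric] intro!: mem_J0_conj_O31ZI O31Z_transpose)
  then have "superApollonian \<subseteq> J0_conj ` O31Z"
    unfolding superApollonian_def by (intro gen_grp_least[OF L]) auto
  moreover have "perm_mat p \<in> J0_conj ` O31Z" if "p permutes {..<4}" for p
    using that by (intro mem_J0_conj_O31ZI J0_conj_perm_mat_in_O31Z) simp_all
  moreover have "1\<^sub>m 4 \<in> J0_conj ` O31Z" "- 1\<^sub>m 4 \<in> J0_conj ` O31Z"
    by (auto intro!: mem_J0_conj_O31ZI simp: J0_conj_uminus O31Z_one O31Z_uminus)
  ultimately have "Gamma \<subseteq> J0_conj ` O31Z"
    unfolding Gamma_def by (intro gen_grp_least[OF L]) auto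
  moreover have "D_mat \<in> J0_conj ` O31Z"
    by (rule mem_J0_conj_O31ZI) (simp_all add: J0_conj_D_mat O31Z_uminus flip_mat_0_in_O31Z)
  ultimately show ?thesis
    unfolding Gamma_tilde_def by (intro gen_grp_least[OF L]) auto
qed

lemma Gamma_tilde_carrier: "Gamma_tilde \<subseteq> carrier_mat 4 4"
proof -
  have "J0_conj ` O31Z \<subseteq> carrier_mat 4 4" using O31Z_carrier by (auto simp: subset_iff)
  then show ?thesis using Gamma_tilde_subset_J0_conj_O31Z by (rule subset_trans[rotated])
qed

section \<open>Reduction of integral Lorentz matrices\<close>

lemma Gamma_tilde_mult: "A \<in> Gamma_tilde \<Longrightarrow> B \<in> Gamma_tilde \<Longrightarrow> A * B \<in> Gamma_tilde"
  unfolding Gamma_tilde_def by (rule gen_grp.mult)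

lemma Gamma_generators_subset_Gamma_tilde:
  "superApollonian \<union> {perm_mat p | p. p permutes {..<4}} \<union> {1\<^sub>m 4, - 1\<^sub>m 4} \<subseteq> Gamma_tilde"
proof -
  have "Gamma \<subseteq> Gamma_tilde" unfolding Gamma_tilde_def using subset_gen_grp by blast
  then show ?thesis using subset_gen_grp unfolding Gamma_def by (rule subset_trans[rotated])
qed

lemma D_mat_in_Gamma_tilde: "D_mat \<in> Gamma_tilde"
  unfolding Gamma_tilde_def using subset_gen_grp by blast

lemma perm_mat_in_Gamma_tilde: "p permutes {..<4} \<Longrightarrow> perm_mat p \<in> Gamma_tilde"
  by (rule subsetD[OF Gamma_generators_subset_Gamma_tilde]) auto

lemma uminus_one_in_Gamma_tilde: "- 1\<^sub>m 4 \<in> Gamma_tilde"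
  by (rule subsetD[OF Gamma_generators_subset_Gamma_tilde]) simp

lemma S_mat_0_in_Gamma_tilde: "S_mat 0 \<in> Gamma_tilde"
proof -
  have "S_mat 0 \<in> {S_mat i | i. i < 4}"
    by (rule CollectI, rule exI[of _ 0]) simp
  then have "S_mat 0 \<in> superApollonian"
    unfolding superApollonian_def by (intro subsetD[OF subset_gen_grp] UnI1)
  then show ?thesis by (rule subsetD[OF Gamma_generators_subset_Gamma_tilde, OF UnI1, OF UnI1])
qed

definition Gamma_L :: "rat mat set" where
  "Gamma_L = J0_conj ` Gamma_tilde"

lemma mat_subgroup_Gamma_L: "mat_subgroup Gamma_L"
  unfolding Gamma_L_def using Gamma_tilde_carrier
  by (intro mat_subgroup_J0_conj_image) (simp add: Gamma_tilde_def mat_subgroup_gen_grp)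

lemma Gamma_L_subset_O31Z: "Gamma_L \<subseteq> O31Z"
proof
  fix M assume "M \<in> Gamma_L"
  then obtain N where N: "N \<in> Gamma_tilde" "M = J0_conj N" unfolding Gamma_L_def by blast
  then have "N \<in> J0_conj ` O31Z" "N \<in> carrier_mat 4 4"
    using Gamma_tilde_subset_J0_conj_O31Z Gamma_tilde_carrier by blast+
  then show "M \<in> O31Z" using J0_conj_image_iff[OF O31Z_carrier] N(2) by blast
qed

lemma Gamma_L_carrier: "g \<in> Gamma_L \<Longrightarrow> g \<in> carrier_mat 4 4"
  using Gamma_L_subset_O31Z O31Z_carrier by blast

lemma Gamma_L_mult: "g \<in> Gamma_L \<Longrightarrow> h \<in> Gamma_L \<Longrightarrow> g * h \<in> Gamma_L"
  by (rule mat_subgroupD(3)[OF mat_subgroup_Gamma_L])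

lemma Gamma_L_mult_O31Z: "g \<in> Gamma_L \<Longrightarrow> U \<in> O31Z \<Longrightarrow> g * U \<in> O31Z"
  using Gamma_L_subset_O31Z O31Z_mult by blast

lemma mem_Gamma_LI: "g \<in> carrier_mat 4 4 \<Longrightarrow> J0_conj g \<in> Gamma_tilde \<Longrightarrow> g \<in> Gamma_L"
  unfolding Gamma_L_def using J0_conj_image_iff[OF Gamma_tilde_carrier] by blast

lemma Gamma_L_cancel_left:
  assumes g: "g \<in> Gamma_L" and gU: "g * U \<in> Gamma_L" and U: "U \<in> carrier_mat 4 4"
  shows "U \<in> Gamma_L"
proof -
  let ?h = "Q_L * transpose_mat g * Q_L"
  have gO: "g \<in> O31Z" using g Gamma_L_subset_O31Z by blast
  then have gc: "g \<in> carrier_mat 4 4" by (simp add: O31Z_iff)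
  have hg: "?h * g = 1\<^sub>m 4" by (rule O31Z_left_inverse[OF gO])
  then have "g * ?h = 1\<^sub>m 4" using mat_mult_left_right_inverse[OF _ gc hg] gc by simp
  then have "?h \<in> Gamma_L" using gc by (intro mat_subgroupD(4)[OF mat_subgroup_Gamma_L g]) simp_all
  then have "?h * (g * U) \<in> Gamma_L" using gU by (rule Gamma_L_mult)
  moreover have "?h * (g * U) = U" using hg gc U by (simp flip: mult_assoc4)
  ultimately show ?thesis by simp
qed

lemma lorentz_reflection_in_Gamma_L: "lorentz_reflection \<in> Gamma_L"
proof (rule mem_Gamma_LI)
  show "lorentz_reflection \<in> carrier_mat 4 4" by (simp add: lorentz_reflection_def)
  then show "J0_conj lorentz_reflection \<in> Gamma_tilde"
    using J0_conj_S_mat_0 S_mat_0_in_Gamma_tilde by (metis J0_conj_J0_conj S_mat_carrier)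
qed

lemma flip_mat_in_Gamma_L:
  assumes "k < 4"
  shows "flip_mat k \<in> Gamma_L"
proof (rule mem_Gamma_LI)
  have translation: "J0_conj (flip_mat k) \<in> Gamma_tilde"
    if "J0_conj (D_mat * perm_mat (Transposition.transpose 0 k \<circ> Transposition.transpose a b)) = flip_mat k"
      and "a < 4" "b < 4" "k < 4" for a b
  proof -
    have "J0_conj (flip_mat k) = D_mat * perm_mat (Transposition.transpose 0 k \<circ> Transposition.transpose a b)"
      using that(1)[symmetric] by simp
    moreover have "Transposition.transpose 0 k \<circ> Transposition.transpose a b permutes {..<4}"
      using that(2-4) by (intro permutes_compose permutes_swap_id) simp_all
    ultimately show ?thesis
      using D_mat_in_Gamma_tilde perm_mat_in_Gamma_tilde Gamma_tilde_mult by simp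
  qed
  have "J0_conj (flip_mat 0) = - D_mat"
    using J0_conj_J0_conj[OF D_mat_carrier] J0_conj_D_mat
    by (simp add: J0_conj_uminus) (metis uminus_uminus_mat)
  moreover have "- D_mat = - 1\<^sub>m 4 * D_mat" by (simp add: D_mat_def)
  then have "- D_mat \<in> Gamma_tilde"
    using uminus_one_in_Gamma_tilde D_mat_in_Gamma_tilde Gamma_tilde_mult by simp
  ultimately show "J0_conj (flip_mat k) \<in> Gamma_tilde"
    using assms translation J0_conj_D_mat_perm_mat by (auto simp: less_4_cases)
qed simp

lemma transposition_in_Gamma_L:
  assumes "0 < a" "a < 4" "0 < b" "b < 4"
  shows "perm_mat (Transposition.transpose a b) \<in> Gamma_L"
proof (cases "a = b")
  case True
  then show ?thesis using mat_subgroupD(2)[OF mat_subgroup_Gamma_L] by (simp add: perm_mat_id)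
next
  case False
  have "perm_mat (Transposition.transpose a' b') \<in> Gamma_L" if "0 < a'" "a' < b'" "b' < 4" for a' b'
  proof (rule mem_Gamma_LI)
    have "J0_conj (perm_mat (Transposition.transpose a' b')) = perm_mat (Transposition.transpose a' b')"
      using that J0_conj_transposition_fixed less_4_cases[of a'] less_4_cases[of b'] by auto
    then show "J0_conj (perm_mat (Transposition.transpose a' b')) \<in> Gamma_tilde"
      using that by (simp add: perm_mat_in_Gamma_tilde permutes_swap_id)
  qed simp
  then show ?thesis
    using assms False by (metis linorder_neqE_nat transpose_commute)
qed

lemma exists_first_column_abs:
  assumes U: "U \<in> O31Z"
  shows "\<exists>g \<in> Gamma_L. \<forall>r < 4. (g * U) $$ (r, 0) = \<bar>U $$ (r, 0)\<bar>"
proof -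
  have Uc: "U \<in> carrier_mat 4 4" using U O31Z_carrier by blast
  have "\<exists>g \<in> Gamma_L. \<forall>r < 4. (g * U) $$ (r, 0) = (if r < n then \<bar>U $$ (r, 0)\<bar> else U $$ (r, 0))"
    if "n \<le> 4" for n
    using that
  proof (induction n)
    case 0
    then show ?case
      using mat_subgroupD(2)[OF mat_subgroup_Gamma_L] Uc by (intro bexI[of _ "1\<^sub>m 4"]) auto
  next
    case (Suc n)
    then obtain g where g: "g \<in> Gamma_L"
      and gU: "\<forall>r < 4. (g * U) $$ (r, 0) = (if r < n then \<bar>U $$ (r, 0)\<bar> else U $$ (r, 0))"
      by auto
    have gc: "g \<in> carrier_mat 4 4" using g by (rule Gamma_L_carrier)
    show ?case
    proof (cases "0 \<le> U $$ (n, 0)")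
      case True
      then show ?thesis using g gU by (intro bexI[of _ g]) (auto simp: less_Suc_eq)
    next
      case False
      have "flip_mat n * g \<in> Gamma_L"
        using Suc.prems g by (intro Gamma_L_mult flip_mat_in_Gamma_L) simp_all
      moreover have "(flip_mat n * g * U) $$ (r, 0) = (if r = n then - (g * U) $$ (r, 0) else (g * U) $$ (r, 0))"
        if "r < 4" for r
        using that gc Uc by (simp add: mult_assoc4 index_flip_mat_mult)
      ultimately show ?thesis
        using gU False by (intro bexI[of _ "flip_mat n * g"]) (auto simp: less_Suc_eq)
    qed
  qed
  from this[of 4] show ?thesis by simp
qed

lemma reflected_first_coord_less:
  fixes b0 b1 b2 b3 :: int
  assumes "1 < b0" "0 \<le> b1" "0 \<le> b2" "0 \<le> b3"
    and norm: "b0\<^sup>2 = 1 + b1\<^sup>2 + b2\<^sup>2 + b3\<^sup>2"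
  shows "\<bar>2 * b0 - b1 - b2 - b3\<bar> < b0"
proof -
  define s where "s = b1 + b2 + b3"
  define c where "c = b1 * b2 + b1 * b3 + b2 * b3"
  have "0 \<le> s" "0 \<le> c" using assms by (simp_all add: s_def c_def)
  have s_sq: "s\<^sup>2 = b0\<^sup>2 - 1 + 2 * c"
    using norm by (simp add: s_def c_def power2_eq_square algebra_simps)
  have "s\<^sup>2 \<le> 3 * (b1\<^sup>2 + b2\<^sup>2 + b3\<^sup>2)"
    using sum_squares_ge_zero[of "b1 - b2" "b1 - b3"] zero_le_power2[of "b2 - b3"]
    by (simp add: s_def power2_eq_square algebra_simps)
  also have "\<dots> < 9 * b0\<^sup>2"
    using norm zero_le_power2[of b1] zero_le_power2[of b2] zero_le_power2[of b3]
    by (smt (verit))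
  also have "\<dots> = (3 * b0)\<^sup>2"
    by (simp add: power_mult_distrib)
  finally have "s < 3 * b0"
    by (rule power_less_imp_less_base) (use \<open>1 < b0\<close> in simp)
  moreover have "b0 < s"
  proof (rule ccontr)
    assume "\<not> b0 < s"
    moreover have "s \<noteq> b0"
    proof
      assume "s = b0"
      then have "2 * c = 1" using s_sq by simp
      then show False by presburger
    qed
    ultimately have "s\<^sup>2 \<le> (b0 - 1)\<^sup>2" using \<open>0 \<le> s\<close> by (simp add: power_mono)
    then show False using s_sq \<open>0 \<le> c\<close> \<open>1 < b0\<close> by (simp add: power2_eq_square algebra_simps)
  qed
  ultimately show ?thesis by (simp add: s_def abs_less_iff)
qed

definition std_columns :: "nat \<Rightarrow> rat mat \<Rightarrow> bool" where
  "std_columns k U \<longleftrightarrow> (\<forall>i < 4. \<forall>j < k. U $$ (i, j) = (if i = j then 1 else 0))"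

lemma index_lorentz_reflection_mult:
  "V \<in> carrier_mat 4 4 \<Longrightarrow>
    (lorentz_reflection * V) $$ (0, 0) = 2 * V $$ (0, 0) - V $$ (1, 0) - V $$ (2, 0) - V $$ (3, 0)"
  unfolding lorentz_reflection_def by (simp del: index_mult_mat(1) add: index_mult_mat4)

lemma nonneg_first_column_descent:
  assumes V: "V \<in> O31Z" and nonneg: "\<forall>r < 4. 0 \<le> V $$ (r, 0)"
  shows "std_columns 1 V \<or> \<lfloor>\<bar>(lorentz_reflection * V) $$ (0, 0)\<bar>\<rfloor> < \<lfloor>V $$ (0, 0)\<rfloor>"
proof -
  define b where "b r = \<lfloor>V $$ (r, 0)\<rfloor>" for r
  have b: "V $$ (r, 0) = of_int (b r)" if "r < 4" for r
    using O31Z_entry_Ints[OF V that, of 0] unfolding b_def by (metis Ints_cases floor_of_int zero_less_numeral)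
  have b_nonneg: "0 \<le> b r" if "r < 4" for r
    using nonneg that unfolding b_def by simp
  have "of_int ((b 0)\<^sup>2) = (of_int (1 + (b 1)\<^sup>2 + (b 2)\<^sup>2 + (b 3)\<^sup>2) :: rat)"
    using O31Z_lorentz_entry[OF V, of 0 0] b[of 0] b[of 1] b[of 2] b[of 3] by (simp add: power2_eq_square)
  then have norm: "(b 0)\<^sup>2 = 1 + (b 1)\<^sup>2 + (b 2)\<^sup>2 + (b 3)\<^sup>2" by (rule of_int_eq_iff[THEN iffD1])
  have squares_nonneg: "0 \<le> (b 1)\<^sup>2" "0 \<le> (b 2)\<^sup>2" "0 \<le> (b 3)\<^sup>2" by simp_all
  have "b 0 \<noteq> 0"
  proof
    assume "b 0 = 0"
    then show False using norm squares_nonneg by (smt (verit) zero_power2)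
  qed
  then have "1 \<le> b 0" using b_nonneg[of 0] by simp
  show ?thesis
  proof (cases "b 0 = 1")
    case True
    then have "(b 1)\<^sup>2 = 0 \<and> (b 2)\<^sup>2 = 0 \<and> (b 3)\<^sup>2 = 0"
      using norm squares_nonneg by (smt (verit) one_power2)
    then have "b 1 = 0" "b 2 = 0" "b 3 = 0" by simp_all
    then have "std_columns 1 V"
      unfolding std_columns_def using b True by (auto simp: less_4_cases)
    then show ?thesis ..
  next
    case False
    then have "1 < b 0" using \<open>1 \<le> b 0\<close> by simp
    have "(lorentz_reflection * V) $$ (0, 0) = of_int (2 * b 0 - b 1 - b 2 - b 3)"
      using V b by (simp add: index_lorentz_reflection_mult O31Z_iff)
    then have "\<lfloor>\<bar>(lorentz_reflection * V) $$ (0, 0)\<bar>\<rfloor> = \<bar>2 * b 0 - b 1 - b 2 - b 3\<bar>"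
      by (metis floor_of_int of_int_abs)
    then show ?thesis
      using reflected_first_coord_less[OF \<open>1 < b 0\<close> b_nonneg[of 1] b_nonneg[of 2] b_nonneg[of 3] norm]
      unfolding b_def by simp
  qed
qed

lemma exists_first_column_std:
  assumes "U \<in> O31Z"
  shows "\<exists>g \<in> Gamma_L. std_columns 1 (g * U)"
  using assms
proof (induction "nat \<lfloor>\<bar>U $$ (0, 0)\<bar>\<rfloor>" arbitrary: U rule: less_induct)
  case (less U)
  obtain g where g: "g \<in> Gamma_L" and gU: "\<forall>r < 4. (g * U) $$ (r, 0) = \<bar>U $$ (r, 0)\<bar>"
    using exists_first_column_abs[OF less.prems] by blast
  have V: "g * U \<in> O31Z" using g less.prems by (rule Gamma_L_mult_O31Z)
  have "\<forall>r < 4. 0 \<le> (g * U) $$ (r, 0)" using gU by simp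
  from nonneg_first_column_descent[OF V this]
  show ?case
  proof
    assume "std_columns 1 (g * U)"
    then show ?thesis using g by blast
  next
    let ?R = lorentz_reflection
    assume "\<lfloor>\<bar>(?R * (g * U)) $$ (0, 0)\<bar>\<rfloor> < \<lfloor>(g * U) $$ (0, 0)\<rfloor>"
    then have "\<lfloor>\<bar>(?R * (g * U)) $$ (0, 0)\<bar>\<rfloor> < \<lfloor>\<bar>U $$ (0, 0)\<bar>\<rfloor>" using gU by simp
    moreover have "0 \<le> \<lfloor>\<bar>(?R * (g * U)) $$ (0, 0)\<bar>\<rfloor>" by simp
    ultimately have "nat \<lfloor>\<bar>(?R * (g * U)) $$ (0, 0)\<bar>\<rfloor> < nat \<lfloor>\<bar>U $$ (0, 0)\<bar>\<rfloor>"
      using nat_less_eq_zless by blast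
    moreover have "?R * (g * U) \<in> O31Z"
      using lorentz_reflection_in_Gamma_L V by (rule Gamma_L_mult_O31Z)
    ultimately obtain h where h: "h \<in> Gamma_L" "std_columns 1 (h * (?R * (g * U)))"
      using less.hyps by blast
    have "h * (?R * (g * U)) = (h * ?R * g) * U"
      using h(1) g less.prems by (simp add: mult_assoc4 Gamma_L_carrier O31Z_iff lorentz_reflection_def)
    moreover have "h * ?R * g \<in> Gamma_L"
      using h(1) lorentz_reflection_in_Gamma_L g by (intro Gamma_L_mult)
    ultimately show ?thesis using h(2) by metis
  qed
qed

lemma Ints_sum_squares_eq_1:
  fixes f :: "'b \<Rightarrow> 'a :: linordered_idom"
  assumes A: "finite A" and ints: "\<forall>a \<in> A. f a \<in> \<int>" and sum: "(\<Sum>a \<in> A. (f a)\<^sup>2) = 1"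
  shows "\<exists>a \<in> A. \<bar>f a\<bar> = 1 \<and> (\<forall>b \<in> A - {a}. f b = 0)"
proof -
  obtain a where a: "a \<in> A" "f a \<noteq> 0"
    using sum by (metis (mono_tags, lifting) sum.neutral power_zero_numeral zero_neq_one)
  have rest: "(\<Sum>a \<in> A. (f a)\<^sup>2) = (f a)\<^sup>2 + (\<Sum>b \<in> A - {a}. (f b)\<^sup>2)"
    using A a(1) by (rule sum.remove)
  have rest_nonneg: "0 \<le> (\<Sum>b \<in> A - {a}. (f b)\<^sup>2)" by (simp add: sum_nonneg)
  have "1 \<le> \<bar>f a\<bar>" using ints a by (simp add: Ints_nonzero_abs_ge1)
  moreover have "\<bar>f a\<bar> \<le> (f a)\<^sup>2"
    using \<open>1 \<le> \<bar>f a\<bar>\<close>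
    by (metis abs_ge_self abs_le_square_iff abs_power2 le_trans power2_abs self_le_power zero_less_numeral)
  ultimately have "\<bar>f a\<bar> = 1" "(\<Sum>b \<in> A - {a}. (f b)\<^sup>2) = 0"
    using sum rest rest_nonneg by linarith+
  moreover have "\<forall>b \<in> A - {a}. f b = 0"
    using \<open>(\<Sum>b \<in> A - {a}. (f b)\<^sup>2) = 0\<close> A by (simp add: sum_nonneg_eq_0_iff)
  ultimately show ?thesis using a(1) by blast
qed

lemma std_columns_next_column:
  assumes U: "U \<in> O31Z" and std: "std_columns k U" and k: "0 < k" "k < 4"
  shows "\<forall>j < k. U $$ (j, k) = 0" and "(\<Sum>r \<in> {k..<4}. (U $$ (r, k))\<^sup>2) = 1"
proof -
  have col: "U $$ (r, j) = (if r = j then 1 else 0)" if "r < 4" "j < k" for r j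
    using std that by (simp add: std_columns_def)
  show above: "\<forall>j < k. U $$ (j, k) = 0"
  proof (intro allI impI)
    fix j assume "j < k"
    then have "j = 0 \<or> j = 1 \<or> j = 2" using k by linarith
    then show "U $$ (j, k) = 0"
      using O31Z_lorentz_entry[OF U, of j k] col[of 0 j] col[of 1 j] col[of 2 j] col[of 3 j] \<open>j < k\<close> k
      by auto
  qed
  have "k = 1 \<or> k = 2 \<or> k = 3" using k by linarith
  then show "(\<Sum>r \<in> {k..<4}. (U $$ (r, k))\<^sup>2) = 1"
    using O31Z_lorentz_entry[OF U, of k k] above k
    by (auto simp: power2_eq_square atLeastLessThan_nat_numeral)
qed

lemma exists_column_pivot:
  assumes U: "U \<in> O31Z" and std: "std_columns k U" and k: "0 < k" "k < 4"
  shows "\<exists>g \<in> Gamma_L. std_columns k (g * U) \<and> \<bar>(g * U) $$ (k, k)\<bar> = 1 \<and>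
    (\<forall>r < 4. r \<noteq> k \<longrightarrow> (g * U) $$ (r, k) = 0)"
proof -
  have Uc: "U \<in> carrier_mat 4 4" using U O31Z_carrier by blast
  obtain i where i: "i \<in> {k..<4}" "\<bar>U $$ (i, k)\<bar> = 1"
    and others: "\<forall>r \<in> {k..<4} - {i}. U $$ (r, k) = 0"
    using Ints_sum_squares_eq_1[OF _ _ std_columns_next_column(2)[OF assms]] O31Z_entry_Ints[OF U] k
    by fastforce
  have above: "\<forall>j < k. U $$ (j, k) = 0" by (rule std_columns_next_column(1)[OF assms])
  let ?\<tau> = "Transposition.transpose k i"
  have \<tau>: "?\<tau> permutes {..<4}" using i k by (simp add: permutes_swap_id)
  have entry: "(perm_mat ?\<tau> * U) $$ (r, c) = U $$ (?\<tau> r, c)" if "r < 4" "c < 4" for r c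
    by (rule index_perm_mat_mult[OF \<tau> Uc that])
  have "std_columns k (perm_mat ?\<tau> * U)"
    using std i k unfolding std_columns_def
    by (auto simp: entry permutes_in_image[OF \<tau>] Transposition.transpose_def)
  moreover have "(perm_mat ?\<tau> * U) $$ (k, k) = U $$ (i, k)" using k by (simp add: entry)
  moreover have "(perm_mat ?\<tau> * U) $$ (r, k) = 0" if "r < 4" "r \<noteq> k" for r
  proof -
    have "?\<tau> r < 4" "?\<tau> r \<noteq> i" using that permutes_in_image[OF \<tau>] by (auto simp: transpose_eq_iff)
    then show ?thesis using that k above others by (cases "?\<tau> r < k") (auto simp: entry)
  qed
  moreover have "perm_mat ?\<tau> \<in> Gamma_L" using i k by (intro transposition_in_Gamma_L) auto
  ultimately show ?thesis using i(2) by (intro bexI[of _ "perm_mat ?\<tau>"]) auto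
qed

lemma exists_std_columns_Suc:
  assumes V: "V \<in> carrier_mat 4 4" and std: "std_columns k V" and k: "k < 4"
    and pivot: "\<bar>V $$ (k, k)\<bar> = 1" and zero: "\<forall>r < 4. r \<noteq> k \<longrightarrow> V $$ (r, k) = 0"
  shows "\<exists>g \<in> Gamma_L. std_columns (Suc k) (g * V)"
proof (cases "V $$ (k, k) = 1")
  case True
  then have "std_columns (Suc k) (1\<^sub>m 4 * V)"
    using std zero V unfolding std_columns_def by (auto simp: less_Suc_eq)
  then show ?thesis using mat_subgroupD(2)[OF mat_subgroup_Gamma_L] by blast
next
  case False
  then have "V $$ (k, k) = -1" using pivot by (simp add: abs_if split: if_splits)
  then have "std_columns (Suc k) (flip_mat k * V)"
    using std zero V k unfolding std_columns_def by (auto simp: less_Suc_eq index_flip_mat_mult)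
  then show ?thesis using flip_mat_in_Gamma_L[OF k] by blast
qed

lemma exists_std_columns:
  assumes U: "U \<in> O31Z" and k: "0 < k" "k \<le> 4"
  shows "\<exists>g \<in> Gamma_L. std_columns k (g * U)"
  using k
proof (induction k)
  case 0
  then show ?case by simp
next
  case (Suc k)
  show ?case
  proof (cases "k = 0")
    case True
    then show ?thesis using exists_first_column_std[OF U] by simp
  next
    case False
    then obtain g where g: "g \<in> Gamma_L" "std_columns k (g * U)" using Suc by auto
    have gU: "g * U \<in> O31Z" using g(1) U by (rule Gamma_L_mult_O31Z)
    obtain h where h: "h \<in> Gamma_L" "std_columns k (h * (g * U))" "\<bar>(h * (g * U)) $$ (k, k)\<bar> = 1"
      "\<forall>r < 4. r \<noteq> k \<longrightarrow> (h * (g * U)) $$ (r, k) = 0"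
      using exists_column_pivot[OF gU g(2)] False Suc.prems by auto
    have hgU: "h * (g * U) \<in> carrier_mat 4 4"
      using Gamma_L_mult_O31Z[OF h(1) gU] O31Z_carrier by blast
    obtain f where f: "f \<in> Gamma_L" "std_columns (Suc k) (f * (h * (g * U)))"
      using exists_std_columns_Suc[OF hgU h(2) _ h(3,4)] Suc.prems by auto
    have "f * (h * (g * U)) = (f * h * g) * U"
      using f(1) h(1) g(1) U by (simp add: mult_assoc4 Gamma_L_carrier O31Z_iff)
    moreover have "f * h * g \<in> Gamma_L"
      using f(1) h(1) g(1) by (intro Gamma_L_mult)
    ultimately show ?thesis using f(2) by metis
  qed
qed

lemma std_columns_4_eq_one: "V \<in> carrier_mat 4 4 \<Longrightarrow> std_columns 4 V \<Longrightarrow> V = 1\<^sub>m 4"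
  unfolding std_columns_def by (intro eq_matI) auto

lemma O31Z_subset_Gamma_L: "O31Z \<subseteq> Gamma_L"
proof
  fix U assume U: "U \<in> O31Z"
  then obtain g where g: "g \<in> Gamma_L" "std_columns 4 (g * U)"
    using exists_std_columns[of U 4] by auto
  then have "g * U = 1\<^sub>m 4"
    using Gamma_L_mult_O31Z[OF g(1) U] O31Z_carrier by (intro std_columns_4_eq_one) auto
  then show "U \<in> Gamma_L"
    using Gamma_L_cancel_left[OF g(1)] mat_subgroupD(2)[OF mat_subgroup_Gamma_L] U O31Z_carrier by auto
qed

lemma J0_conj_O31Z_subset_Gamma_tilde: "J0_conj ` O31Z \<subseteq> Gamma_tilde"
proof
  fix M assume "M \<in> J0_conj ` O31Z"
  then obtain U where U: "U \<in> O31Z" "M = J0_conj U" by blast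
  then have "U \<in> J0_conj ` Gamma_tilde" "U \<in> carrier_mat 4 4"
    using O31Z_subset_Gamma_L O31Z_carrier unfolding Gamma_L_def by blast+
  then show "M \<in> Gamma_tilde" using J0_conj_image_iff[OF Gamma_tilde_carrier] U(2) by blast
qed

theorem lemma7p5:
  shows "Gamma_tilde = {J0 * U * J0_inv | U. U \<in> O31Z}"
proof -
  have "Gamma_tilde = J0_conj ` O31Z"
    by (rule subset_antisym[OF Gamma_tilde_subset_J0_conj_O31Z J0_conj_O31Z_subset_Gamma_tilde])
  also have "\<dots> = {J0 * U * J0_inv | U. U \<in> O31Z}"
    by (simp add: J0_inv_eq_J0 J0_conj_def setcompr_eq_image)
  finally show ?thesis .
qed

end
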